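(* Let $G_{\mathit{di}}$ be a knowledge connectivity graph whose sink component (vertex set $V_{\mathit{sink}}$) contains at least $2f+1$ correct processes. If the slices of the processes are defined by the slice construction below, then every correct process $i\in W$ has at least one quorum $Q$ composed entirely of correct processes, i.e. $i\in Q\subseteq W$.
   Context: Processes and faults: $\Pi$ is a finite set of processes, $f\ge0$ a known integer; $W\subseteq\Pi$ is the set of correct processes and $F=\Pi\setminus W$ the Byzantine faulty processes, $|F|\le f$. Faulty processes may declare arbitrary slices. Slices and quorums: each process $i$ has a set $\mathcal{S}_i$ of slices (subsets of $\Pi$). $Q\subseteq\Pi$ is a quorum if every $i\in Q$ has some $S\in\mathcal{S}_i$ with $S\subseteq Q$; a quorum of $i$ is a quorum containing $i$. Knowledge graph: each process $i$ is given $\mathit{PD}_i\subseteq\Pi$; the knowledge connectivity graph $G_{\mathit{di}}$ is the directed graph on $\Pi$ with edge $(i,j)$ iff $j\in\mathit{PD}_i$. A sink component is a strongly connected component of $G_{\mathit{di}}$ from which no path leads outside it; $G_{\mathit{di}}$ is assumed to have a unique sink component, with vertex set $V_{\mathit{sink}}$. Slice construction: let $m=\lceil (|V_{\mathit{sink}}|+f+1)/2\rceil$. Every correct $i\in V_{\mathit{sink}}$ has $\mathcal{S}_i=\{S\subseteq V_{\mathit{sink}}: |S|=m\}$. Every correct $i\notin V_{\mathit{sink}}$ is given (by a sink detector) a set $V_i\subseteq V_{\mathit{sink}}$ containing at least $f+1$ correct members of $V_{\mathit{sink}}$, and has $\mathcal{S}_i=\{S\subseteq V_i: |S|=f+1\}$.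 *)

theory Defs
  imports Complex_Main
begin

definition is_quorum :: "('p \<Rightarrow> 'p set set) \<Rightarrow> 'p set \<Rightarrow> bool" where
  "is_quorum Sl Q \<longleftrightarrow> (\<forall>i\<in>Q. \<exists>S\<in>Sl i. S \<subseteq> Q)"

definition kc_edges :: "'p set \<Rightarrow> ('p \<Rightarrow> 'p set) \<Rightarrow> ('p \<times> 'p) set" where
  "kc_edges P PD = {(i, j). i \<in> P \<and> j \<in> P \<and> j \<in> PD i}"

definition is_scc :: "'p set \<Rightarrow> ('p \<Rightarrow> 'p set) \<Rightarrow> 'p set \<Rightarrow> bool" where
  "is_scc P PD C \<longleftrightarrow> C \<noteq> {} \<and> C \<subseteq> P \<and>
     (\<forall>x\<in>C. \<forall>y\<in>C. (x, y) \<in> (kc_edges P PD)\<^sup>*) \<and>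
     (\<forall>x\<in>C. \<forall>y\<in>P. (x, y) \<in> (kc_edges P PD)\<^sup>* \<and> (y, x) \<in> (kc_edges P PD)\<^sup>* \<longrightarrow> y \<in> C)"

definition is_sink_component :: "'p set \<Rightarrow> ('p \<Rightarrow> 'p set) \<Rightarrow> 'p set \<Rightarrow> bool" where
  "is_sink_component P PD C \<longleftrightarrow> is_scc P PD C \<and>
     (\<forall>x\<in>C. \<forall>y. (x, y) \<in> (kc_edges P PD)\<^sup>* \<longrightarrow> y \<in> C)"

end

theory Submission
  imports Defs
begin

text \<open>The correct members \<open>C = Vsink \<inter> W\<close> of the sink number at least \<open>2f + 1\<close> and at least
  \<open>|Vsink| - f\<close>, hence at least \<open>\<lceil>(|Vsink| + f + 1) / 2\<rceil>\<close>. So every correct sink process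
  has a slice inside \<open>C\<close>, and \<open>C\<close> is a quorum. A correct process \<open>i\<close> outside the sink has
  \<open>f + 1\<close> correct members of \<open>V i \<subseteq> Vsink\<close>, which form a slice inside \<open>C\<close>; thus
  \<open>insert i C\<close> is a quorum.\<close>

lemma is_quorum_insert:
  assumes "is_quorum Sl Q" and "S \<in> Sl i" and "S \<subseteq> Q"
  shows "is_quorum Sl (insert i Q)"
  using assms unfolding is_quorum_def by (metis insert_iff subset_insertI2)

lemma threshold_slice_within:
  assumes "m \<le> card (V \<inter> Q)"
  shows "\<exists>S\<in>{S. S \<subseteq> V \<and> card S = m}. S \<subseteq> Q"
proof -
  obtain S where "S \<subseteq> V \<inter> Q" and "card S = m"
    using obtain_subset_with_card_n[OF assms] .
  then show ?thesis by auto
qed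

lemma is_quorum_if_threshold_slices:
  assumes "\<forall>j\<in>C. Sl j = {S. S \<subseteq> V \<and> card S = m}" and "m \<le> card (V \<inter> C)"
  shows "is_quorum Sl C"
  using assms threshold_slice_within unfolding is_quorum_def by metis

lemma card_le_card_Int_plus_outside:
  assumes "finite P" and "V \<subseteq> P" and "card (P - W) \<le> f"
  shows "card V \<le> card (V \<inter> W) + f"
proof -
  have "card (V - W) \<le> card (P - W)"
    using assms by (intro card_mono) auto
  moreover have "card V = card (V \<inter> W) + card (V - W)"
    using assms finite_subset by (metis card_Int_Diff)
  ultimately show ?thesis
    using assms(3) by linarith
qed

lemma nat_ceiling_half_le:
  fixes n f c :: nat
  assumes "n \<le> c + f" and "2 * f + 1 \<le> c"
  shows "nat \<lceil>(real n + real f + 1) / 2\<rceil> \<le> c"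
proof -
  have "real n + real f + 1 \<le> 2 * real c"
    using assms by linarith
  then have "(real n + real f + 1) / 2 \<le> real c"
    by simp
  then show ?thesis
    by (metis ceiling_le nat_le_iff of_int_of_nat_eq)
qed

lemma sink_component_subset:
  "is_sink_component P PD C \<Longrightarrow> C \<subseteq> P"
  unfolding is_sink_component_def is_scc_def by blast

theorem theorem4:
  fixes P W :: "'p set" and f :: nat
    and PD :: "'p \<Rightarrow> 'p set" and Sl :: "'p \<Rightarrow> 'p set set"
    and Vsink :: "'p set" and V :: "'p \<Rightarrow> 'p set"
  assumes finP: "finite P"
    and WP: "W \<subseteq> P"
    and faulty: "card (P - W) \<le> f"
    and PD_sub: "\<forall>i\<in>P. PD i \<subseteq> P"
    and sink: "is_sink_component P PD Vsink"
    and sink_unique: "\<forall>C. is_sink_component P PD C \<longrightarrow> C = Vsink"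
    and sink_correct: "card (Vsink \<inter> W) \<ge> 2 * f + 1"
    and slices_sink: "\<forall>i\<in>W \<inter> Vsink. Sl i =
        {S. S \<subseteq> Vsink \<and> card S = nat \<lceil>(real (card Vsink) + real f + 1) / 2\<rceil>}"
    and V_sub: "\<forall>i\<in>W - Vsink. V i \<subseteq> Vsink \<and> card (V i \<inter> W) \<ge> f + 1"
    and slices_out: "\<forall>i\<in>W - Vsink. Sl i = {S. S \<subseteq> V i \<and> card S = f + 1}"
  shows "\<forall>i\<in>W. \<exists>Q. is_quorum Sl Q \<and> i \<in> Q \<and> Q \<subseteq> W"
proof
  define C where "C = Vsink \<inter> W"
  have "card Vsink \<le> card C + f"
    unfolding C_def using finP sink_component_subset[OF sink] faulty
    by (rule card_le_card_Int_plus_outside)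
  then have "nat \<lceil>(real (card Vsink) + real f + 1) / 2\<rceil> \<le> card (Vsink \<inter> C)"
    using sink_correct nat_ceiling_half_le by (simp add: C_def)
  then have C_quorum: "is_quorum Sl C"
    by (rule is_quorum_if_threshold_slices[rotated]) (use slices_sink in \<open>auto simp: C_def\<close>)
  fix i assume "i \<in> W"
  show "\<exists>Q. is_quorum Sl Q \<and> i \<in> Q \<and> Q \<subseteq> W"
  proof (cases "i \<in> Vsink")
    case True
    with \<open>i \<in> W\<close> C_quorum show ?thesis by (auto simp: C_def)
  next
    case False
    with \<open>i \<in> W\<close> V_sub have "V i \<inter> C = V i \<inter> W" and "f + 1 \<le> card (V i \<inter> W)"
      by (auto simp: C_def)
    then have "f + 1 \<le> card (V i \<inter> C)"
      by simp
    then obtain S where "S \<in> Sl i" "S \<subseteq> C"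
      using threshold_slice_within slices_out \<open>i \<in> W\<close> False by blast
    with C_quorum \<open>i \<in> W\<close> show ?thesis
      by (intro exI[of _ "insert i C"]) (auto simp: C_def intro: is_quorum_insert)
  qed
qed

end
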